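(* Let $r,k,s$ be integers with $k+r\neq 0$ and $k+s\neq 0$, and let $n\ge 0$ be an integer. Then \[ 2\sum_{j=0}^{n}(-1)^{(k+s)j}L_{r-s}^{j}L_{2k+r+s}^{n-j}=\sum_{j=0}^{n}\left(\frac{L_{k+r}L_{k+s}}{2}\right)^j\left(L_{2k+r+s}^{n-j}+(-1)^{(k+s)(n-j)}L_{r-s}^{n-j}\right)=2\,\frac{L_{2k+r+s}^{n+1}-(-1)^{(k+s)(n+1)}L_{r-s}^{n+1}}{5F_{k+r}F_{k+s}}. \]
   Context: $F_n$ and $L_n$ denote the Fibonacci and Lucas numbers, defined for all integers $n$ by $F_0=0,F_1=1$, $L_0=2,L_1=1$ and $x_n=x_{n-1}+x_{n-2}$; equivalently $F_n=(\alpha^n-\beta^n)/(\alpha-\beta)$, $L_n=\alpha^n+\beta^n$ with $\alpha=(1+\sqrt5)/2$, $\beta=(1-\sqrt5)/2$. In particular $F_{-n}=(-1)^{n-1}F_n$ and $L_{-n}=(-1)^nL_n$. *)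

theory Defs
  imports Complex_Main
begin

fun fibn :: "nat \<Rightarrow> int" where
  "fibn 0 = 0"
| "fibn (Suc 0) = 1"
| "fibn (Suc (Suc n)) = fibn (Suc n) + fibn n"

fun lucn :: "nat \<Rightarrow> int" where
  "lucn 0 = 2"
| "lucn (Suc 0) = 1"
| "lucn (Suc (Suc n)) = lucn (Suc n) + lucn n"

definition fibz :: "int \<Rightarrow> int" where
  "fibz m = (if m \<ge> 0 then fibn (nat m) else (-1) ^ (nat (-m) + 1) * fibn (nat (-m)))"

definition lucz :: "int \<Rightarrow> int" where
  "lucz m = (if m \<ge> 0 then lucn (nat m) else (-1) ^ nat (-m) * lucn (nat (-m)))"

end

theory Submission
  imports Defs
begin

text \<open>By Binet's formulas, with \<open>A = L(2k+r+s)\<close> and \<open>B = (-1)^(k+s) L(r-s)\<close> one has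
  \<open>L(k+r) L(k+s) = A + B\<close> and \<open>5 F(k+r) F(k+s) = A - B\<close>, the latter nonzero.  The three
  expressions are then \<open>2 \<Sum> B^j A^(n-j)\<close>, \<open>\<Sum> ((A+B)/2)^j (A^(n-j) + B^(n-j))\<close> and
  \<open>2 (A^(n+1) - B^(n+1)) / (A - B)\<close>, which agree by the finite geometric series, applied
  to the pairs \<open>(A, B)\<close>, \<open>(A, (A+B)/2)\<close> and \<open>(B, (A+B)/2)\<close>.\<close>

lemma sum_power_mult_power_eq:
  fixes x y :: "'a :: field"
  assumes "x \<noteq> y"
  shows "(\<Sum>j=0..n. y ^ j * x ^ (n - j)) = (x ^ (n + 1) - y ^ (n + 1)) / (x - y)"
proof -
  have "x ^ Suc n - y ^ Suc n = (x - y) * (\<Sum>j<Suc n. y ^ j * x ^ (n - j))"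
    using diff_power_eq_sum[of y n x] by (simp add: algebra_simps)
  moreover have "{..<Suc n} = {0..n}" by auto
  ultimately show ?thesis using assms by (simp add: field_simps)
qed

lemma sum_midpoint_power_mult_power_add_eq:
  fixes x y :: "'a :: field_char_0"
  assumes "x \<noteq> y"
  shows "(\<Sum>j=0..n. ((x + y) / 2) ^ j * (x ^ (n - j) + y ^ (n - j)))
    = 2 * (x ^ (n + 1) - y ^ (n + 1)) / (x - y)"
proof -
  define m where "m = (x + y) / 2"
  have "x - m = (x - y) / 2" "y - m = - ((x - y) / 2)"
    unfolding m_def by (simp_all add: field_simps)
  then have "x \<noteq> m" "y \<noteq> m" using assms by auto
  have "(\<Sum>j=0..n. m ^ j * (x ^ (n - j) + y ^ (n - j)))
      = (\<Sum>j=0..n. m ^ j * x ^ (n - j)) + (\<Sum>j=0..n. m ^ j * y ^ (n - j))"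
    by (simp add: distrib_left sum.distrib)
  also have "\<dots> = (x ^ (n + 1) - m ^ (n + 1)) / (x - m) + (y ^ (n + 1) - m ^ (n + 1)) / (y - m)"
    using sum_power_mult_power_eq[OF \<open>x \<noteq> m\<close>] sum_power_mult_power_eq[OF \<open>y \<noteq> m\<close>] by simp
  also have "\<dots> = 2 * (x ^ (n + 1) - y ^ (n + 1)) / (x - y)"
  proof -
    have "(X - M) / (d / 2) + (Y - M) / - (d / 2) = 2 * (X - Y) / d" if "d \<noteq> 0" for X Y M d :: 'a
      using that by (simp add: field_simps)
    then show ?thesis unfolding \<open>x - m = _\<close> \<open>y - m = _\<close> using assms by simp
  qed
  finally show ?thesis unfolding m_def .
qed

lemma power_Suc_Suc_of_square_eq:
  fixes x :: "'a :: comm_ring_1"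
  assumes "x ^ 2 = x + 1"
  shows "x ^ Suc (Suc n) = x ^ Suc n + x ^ n"
proof -
  have "x ^ Suc (Suc n) = x ^ 2 * x ^ n" by (simp add: power2_eq_square)
  then show ?thesis using assms by (simp add: algebra_simps)
qed

lemma powi_minus_of_mult_eq_minus_one:
  fixes x y :: "'a :: field"
  assumes "x * y = -1"
  shows "x powi (- int n) = (- y) ^ n"
proof -
  have "inverse x = - y"
    using assms by (intro inverse_unique) simp
  then show ?thesis by (simp add: power_int_minus flip: power_inverse)
qed

lemma powi_mult_powi_of_mult_eq_minus_one:
  fixes x y :: "'a :: field"
  assumes "x * y = -1"
  shows "x powi a * y powi b = (-1) powi b * x powi (a - b)"
proof -
  have "x \<noteq> 0" using assms by auto
  then have "x powi a = x powi (a - b) * x powi b"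
    by (simp add: power_int_add[symmetric])
  then have "x powi a * y powi b = x powi (a - b) * (x * y) powi b"
    by (simp add: power_int_mult_distrib)
  then show ?thesis by (simp add: assms)
qed

lemma powi_add_mult_of_mult_eq_minus_one:
  fixes x y :: "'a :: field"
  assumes "x * y = -1"
  shows "(x powi a + y powi a) * (x powi b + y powi b)
      = (x powi (a + b) + y powi (a + b)) + (-1) powi b * (x powi (a - b) + y powi (a - b))"
    and "(x powi a - y powi a) * (x powi b - y powi b)
      = (x powi (a + b) + y powi (a + b)) - (-1) powi b * (x powi (a - b) + y powi (a - b))"
proof -
  have "x \<noteq> 0" "y \<noteq> 0" using assms by auto
  then have same: "x powi a * x powi b = x powi (a + b)" "y powi a * y powi b = y powi (a + b)"
    by (simp_all add: power_int_add)
  have "y * x = -1" using assms by (simp add: mult.commute)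
  note cross = powi_mult_powi_of_mult_eq_minus_one[OF assms, of a b]
    powi_mult_powi_of_mult_eq_minus_one[OF \<open>y * x = -1\<close>, of a b]
  show "(x powi a + y powi a) * (x powi b + y powi b)
      = (x powi (a + b) + y powi (a + b)) + (-1) powi b * (x powi (a - b) + y powi (a - b))"
    using same cross by (simp add: algebra_simps)
  show "(x powi a - y powi a) * (x powi b - y powi b)
      = (x powi (a + b) + y powi (a + b)) - (-1) powi b * (x powi (a - b) + y powi (a - b))"
    using same cross by (simp add: algebra_simps)
qed

definition \<phi> :: real where "\<phi> = (1 + sqrt 5) / 2"
definition \<psi> :: real where "\<psi> = (1 - sqrt 5) / 2"

lemma golden_mult: "\<phi> * \<psi> = -1"
  unfolding \<phi>_def \<psi>_def by (simp add: algebra_simps)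

lemma golden_square: "\<phi> ^ 2 = \<phi> + 1" "\<psi> ^ 2 = \<psi> + 1"
  unfolding \<phi>_def \<psi>_def by (simp_all add: power2_eq_square field_simps)

lemma lucn_binet: "real_of_int (lucn n) = \<phi> ^ n + \<psi> ^ n"
proof (induction n rule: lucn.induct)
  case 3
  then show ?case
    using power_Suc_Suc_of_square_eq[OF golden_square(1)] power_Suc_Suc_of_square_eq[OF golden_square(2)]
    by simp
qed (simp_all add: \<phi>_def \<psi>_def field_simps)

lemma fibn_binet: "real_of_int (fibn n) * sqrt 5 = \<phi> ^ n - \<psi> ^ n"
proof (induction n rule: fibn.induct)
  case 3
  then show ?case
    using power_Suc_Suc_of_square_eq[OF golden_square(1)] power_Suc_Suc_of_square_eq[OF golden_square(2)]
    by (simp add: algebra_simps)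
qed (simp_all add: \<phi>_def \<psi>_def field_simps)

lemma golden_powi_minus: "\<phi> powi (- int n) = (- \<psi>) ^ n" "\<psi> powi (- int n) = (- \<phi>) ^ n"
  using golden_mult by (simp_all add: powi_minus_of_mult_eq_minus_one mult.commute)

lemma lucz_binet: "real_of_int (lucz m) = \<phi> powi m + \<psi> powi m"
proof (cases "m \<ge> 0")
  case True
  then obtain n where "m = int n" by (metis nonneg_eq_int)
  then show ?thesis by (simp add: lucz_def lucn_binet)
next
  case False
  then obtain n where m: "m = - int n" by (metis linear nonpos_int_cases)
  have "\<phi> powi m + \<psi> powi m = (-1) ^ n * (\<phi> ^ n + \<psi> ^ n)"
    unfolding m golden_powi_minus power_minus[of \<phi>] power_minus[of \<psi>] by (simp add: algebra_simps)
  then show ?thesis using False m by (simp add: lucz_def lucn_binet)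
qed

lemma fibz_binet: "real_of_int (fibz m) * sqrt 5 = \<phi> powi m - \<psi> powi m"
proof (cases "m \<ge> 0")
  case True
  then obtain n where "m = int n" by (metis nonneg_eq_int)
  then show ?thesis by (simp add: fibz_def fibn_binet)
next
  case False
  then obtain n where m: "m = - int n" by (metis linear nonpos_int_cases)
  have "\<phi> powi m - \<psi> powi m = (-1) ^ (n + 1) * (\<phi> ^ n - \<psi> ^ n)"
    unfolding m golden_powi_minus power_minus[of \<phi>] power_minus[of \<psi>] by (simp add: algebra_simps)
  then show ?thesis using False m fibn_binet[of n] by (simp add: fibz_def)
qed

lemma lucz_mult_lucz:
  "real_of_int (lucz a) * real_of_int (lucz b)
    = real_of_int (lucz (a + b)) + (-1) powi b * real_of_int (lucz (a - b))"
  unfolding lucz_binet by (rule powi_add_mult_of_mult_eq_minus_one(1)[OF golden_mult])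

lemma fibz_mult_fibz:
  "5 * real_of_int (fibz a) * real_of_int (fibz b)
    = real_of_int (lucz (a + b)) - (-1) powi b * real_of_int (lucz (a - b))"
proof -
  have "5 * real_of_int (fibz a) * real_of_int (fibz b)
      = (real_of_int (fibz a) * sqrt 5) * (real_of_int (fibz b) * sqrt 5)"
    by (simp add: algebra_simps)
  then show ?thesis
    unfolding fibz_binet lucz_binet by (simp add: powi_add_mult_of_mult_eq_minus_one(2)[OF golden_mult])
qed

lemma fibn_pos: "n > 0 \<Longrightarrow> fibn n > 0"
proof (induction n rule: fibn.induct)
  case (3 n)
  then show ?case by (cases n) auto
qed auto

lemma fibz_nonzero: "m \<noteq> 0 \<Longrightarrow> fibz m \<noteq> 0"
  using fibn_pos[of "nat m"] fibn_pos[of "nat (- m)"] by (cases "m > 0") (auto simp: fibz_def)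

theorem theorem8:
  fixes r k s :: int and n :: nat
  assumes "k + r \<noteq> 0" and "k + s \<noteq> 0"
  shows "2 * (\<Sum>j=0..n. (-1::real) powi ((k+s) * int j) * real_of_int (lucz (r-s)) ^ j
              * real_of_int (lucz (2*k+r+s)) ^ (n-j))
         = (\<Sum>j=0..n. (real_of_int (lucz (k+r)) * real_of_int (lucz (k+s)) / 2) ^ j
              * (real_of_int (lucz (2*k+r+s)) ^ (n-j)
                 + (-1::real) powi ((k+s) * int (n-j)) * real_of_int (lucz (r-s)) ^ (n-j)))
       \<and> (\<Sum>j=0..n. (real_of_int (lucz (k+r)) * real_of_int (lucz (k+s)) / 2) ^ j
              * (real_of_int (lucz (2*k+r+s)) ^ (n-j)
                 + (-1::real) powi ((k+s) * int (n-j)) * real_of_int (lucz (r-s)) ^ (n-j)))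
         = 2 * (real_of_int (lucz (2*k+r+s)) ^ (n+1)
                - (-1::real) powi ((k+s) * int (n+1)) * real_of_int (lucz (r-s)) ^ (n+1))
             / (5 * real_of_int (fibz (k+r)) * real_of_int (fibz (k+s)))"
proof -
  define A where "A = real_of_int (lucz (2*k+r+s))"
  define B where "B = (-1::real) powi (k+s) * real_of_int (lucz (r-s))"
  have B_power: "(-1::real) powi ((k+s) * int i) * real_of_int (lucz (r-s)) ^ i = B ^ i" for i
    unfolding B_def by (simp add: power_int_mult power_mult_distrib)
  have indices: "(k+r) + (k+s) = 2*k+r+s" "(k+r) - (k+s) = r - s" by simp_all
  have lucas: "real_of_int (lucz (k+r)) * real_of_int (lucz (k+s)) = A + B"
    using lucz_mult_lucz[of "k+r" "k+s"] unfolding A_def B_def indices .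
  have fibonacci: "5 * real_of_int (fibz (k+r)) * real_of_int (fibz (k+s)) = A - B"
    using fibz_mult_fibz[of "k+r" "k+s"] unfolding A_def B_def indices .
  have "A \<noteq> B"
    using fibonacci fibz_nonzero assms by (metis eq_iff_diff_eq_0 mult_eq_0_iff of_int_eq_0_iff zero_neq_numeral)
  show ?thesis
    unfolding lucas fibonacci B_power A_def[symmetric]
    using sum_power_mult_power_eq[OF \<open>A \<noteq> B\<close>, of n]
      sum_midpoint_power_mult_power_add_eq[OF \<open>A \<noteq> B\<close>, of n]
    by (simp only: mult_2 add_divide_distrib diff_divide_distrib)
qed

end
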